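(* Let $N$ and $\Delta$ be integers with $\frac{N}{2} < \Delta \le N$. Then for every integer $M$ with $\binom{\Delta}{2} \le M \le f(N,\Delta)$, the pair $(N,M)$ is feasible for the family of all line graphs.
   Context: All graphs are finite and simple; $L(G)$ is the line graph of $G$; $e(\cdot)$, $\Delta(\cdot)$, $\delta(\cdot)$ denote number of edges, maximum degree and minimum degree. For integers $N \ge \Delta \ge 1$, $f(N,\Delta) = \max\{ e(L(G)) : e(G)=N, \Delta(G)=\Delta, \delta(G)\geq 1\}$. A pair $(N,M)$ is feasible (for the family of all line graphs) if there exists a graph $G$ such that $L(G)$ has exactly $N$ vertices and exactly $M$ edges. *)

theory Defs
  imports Main
begin

text \<open>A finite simple graph is represented by its edge set: a finite set of
2-element vertex sets (vertices are natural numbers). Its vertex set is taken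
to be the set of endpoints, so every vertex has degree at least 1.\<close>

definition simple_graph :: "nat set set \<Rightarrow> bool" where
  "simple_graph E \<longleftrightarrow> finite E \<and> (\<forall>e\<in>E. card e = 2)"

definition vertices :: "nat set set \<Rightarrow> nat set" where
  "vertices E = \<Union>E"

definition degree :: "nat set set \<Rightarrow> nat \<Rightarrow> nat" where
  "degree E v = card {e\<in>E. v \<in> e}"

definition max_degree :: "nat set set \<Rightarrow> nat" where
  "max_degree E = Max (degree E ` vertices E)"

definition min_degree :: "nat set set \<Rightarrow> nat" where
  "min_degree E = Min (degree E ` vertices E)"

definition line_edges :: "nat set set \<Rightarrow> nat set set set" where
  "line_edges E = {{e1, e2} | e1 e2. e1 \<in> E \<and> e2 \<in> E \<and> e1 \<noteq> e2 \<and> e1 \<inter> e2 \<noteq> {}}"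

definition f_max :: "nat \<Rightarrow> nat \<Rightarrow> nat" where
  "f_max N D = Max {card (line_edges E) | E. simple_graph E \<and> card E = N
      \<and> max_degree E = D \<and> min_degree E \<ge> 1}"

definition feasible_line :: "nat \<Rightarrow> nat \<Rightarrow> bool" where
  "feasible_line N M \<longleftrightarrow> (\<exists>E. simple_graph E \<and> card E = N \<and> card (line_edges E) = M)"

end

theory Submission
  imports Defs
begin

(* Write N = D + k with k < D. For the upper bound fix a vertex v of degree D: pairs of edges
   at v give C(D,2) adjacencies, pairs of the remaining k edges at most C(k,2), and an edge {v,x}
   meets an edge f avoiding v only if x \<in> f, which allows at most 2k mixed adjacencies. Hence
   f(N,D) \<le> C(D,2) + C(k,2) + 2k. Conversely, the star with centre 0 and leaves 1..D, plus
   j < D further edges at the leaf 1 (a of them to other leaves, j - a to new vertices), plus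
   k - j isolated edges, has exactly C(D,2) + C(j+1,2) + a adjacent pairs of edges; for j \<le> k
   and a \<le> j these numbers fill the interval from C(D,2) to C(D,2) + C(k,2) + 2k. *)

lemma finite_vertices: "simple_graph E \<Longrightarrow> finite (vertices E)"
  unfolding simple_graph_def vertices_def
  by (intro finite_Union) (auto intro: card_ge_0_finite)

lemma vertices_nonempty: "simple_graph E \<Longrightarrow> E \<noteq> {} \<Longrightarrow> vertices E \<noteq> {}"
proof -
  assume "simple_graph E" "E \<noteq> {}"
  then obtain e where "e \<in> E" "card e = 2"
    unfolding simple_graph_def by blast
  then have "e \<noteq> {}"
    by auto
  with \<open>e \<in> E\<close> show ?thesis
    unfolding vertices_def by blast
qed

lemma degree_pos_iff: "finite E \<Longrightarrow> 0 < degree E v \<longleftrightarrow> v \<in> vertices E"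
  unfolding degree_def vertices_def by (auto simp: card_gt_0_iff)

lemma max_degree_attained:
  assumes "simple_graph E" "E \<noteq> {}"
  obtains v where "degree E v = max_degree E"
proof -
  have "max_degree E \<in> degree E ` vertices E"
    unfolding max_degree_def
    using finite_vertices[OF assms(1)] vertices_nonempty[OF assms] by (intro Max_in) simp_all
  then show ?thesis
    using that by (metis imageE)
qed

lemma min_degree_ge_1:
  assumes "simple_graph E" "E \<noteq> {}"
  shows "1 \<le> min_degree E"
proof -
  have "min_degree E \<in> degree E ` vertices E"
    unfolding min_degree_def
    using finite_vertices[OF assms(1)] vertices_nonempty[OF assms] by (intro Min_in) simp_all
  then obtain v where "v \<in> vertices E" "min_degree E = degree E v"
    by blast
  moreover have "finite E"
    using assms(1) by (simp add: simple_graph_def)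
  ultimately show ?thesis
    using degree_pos_iff[of E v] by simp
qed

lemma max_degree_eqI:
  assumes "simple_graph E" "\<And>z. degree E z \<le> d" "degree E v = d" "1 \<le> d"
  shows "max_degree E = d"
proof -
  have "finite E"
    using assms(1) by (simp add: simple_graph_def)
  then have "v \<in> vertices E"
    using assms(3,4) degree_pos_iff[of E v] by simp
  then show ?thesis
    unfolding max_degree_def using finite_vertices[OF assms(1)] assms(2,3)
    by (intro Max_eqI) auto
qed

lemma line_edges_subset: "line_edges E \<subseteq> {S. S \<subseteq> E \<and> card S = 2}"
  unfolding line_edges_def by clarsimp

lemma finite_line_edges: "finite E \<Longrightarrow> finite (line_edges E)"
  using line_edges_subset by (rule finite_subset) simp

lemma line_edges_insert:
  assumes "e \<notin> E"
  shows "line_edges (insert e E) = line_edges E \<union> (\<lambda>f. {e, f}) ` {f\<in>E. e \<inter> f \<noteq> {}}"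
proof
  show "line_edges (insert e E) \<subseteq> line_edges E \<union> (\<lambda>f. {e, f}) ` {f\<in>E. e \<inter> f \<noteq> {}}"
  proof
    fix s assume "s \<in> line_edges (insert e E)"
    then obtain e1 e2 where s: "s = {e1, e2}" "e1 \<in> insert e E" "e2 \<in> insert e E"
      "e1 \<noteq> e2" "e1 \<inter> e2 \<noteq> {}"
      unfolding line_edges_def by blast
    then consider "e1 = e" | "e2 = e" | "e1 \<in> E" "e2 \<in> E" by blast
    then show "s \<in> line_edges E \<union> (\<lambda>f. {e, f}) ` {f\<in>E. e \<inter> f \<noteq> {}}"
    proof cases
      case 1
      then have "e2 \<in> {f\<in>E. e \<inter> f \<noteq> {}}" using s by auto
      then show ?thesis using s(1) 1 by blast
    next
      case 2
      then have "e1 \<in> {f\<in>E. e \<inter> f \<noteq> {}}" using s by auto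
      moreover have "s = {e, e1}" using s(1) 2 by auto
      ultimately show ?thesis by blast
    next
      case 3
      then show ?thesis using s unfolding line_edges_def by blast
    qed
  qed
  have "(\<lambda>f. {e, f}) ` {f\<in>E. e \<inter> f \<noteq> {}} \<subseteq> line_edges (insert e E)"
    using assms unfolding line_edges_def by auto
  moreover have "line_edges E \<subseteq> line_edges (insert e E)"
    unfolding line_edges_def by blast
  ultimately show "line_edges E \<union> (\<lambda>f. {e, f}) ` {f\<in>E. e \<inter> f \<noteq> {}} \<subseteq> line_edges (insert e E)"
    by blast
qed

lemma card_line_edges_insert:
  assumes "finite E" "e \<notin> E"
  shows "card (line_edges (insert e E)) = card (line_edges E) + card {f\<in>E. e \<inter> f \<noteq> {}}"
proof -
  have "inj_on (\<lambda>f. {e, f}) {f\<in>E. e \<inter> f \<noteq> {}}"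
    using assms(2) by (intro inj_onI) (metis doubleton_eq_iff)
  moreover have "line_edges E \<inter> (\<lambda>f. {e, f}) ` {f\<in>E. e \<inter> f \<noteq> {}} = {}"
    using assms(2) line_edges_subset by fast
  ultimately show ?thesis
    using assms by (simp add: line_edges_insert finite_line_edges card_Un_disjoint card_image)
qed

lemma card_line_edges_insert_edge:
  assumes "simple_graph E" "u \<noteq> w" "{u, w} \<notin> E"
  shows "card (line_edges (insert {u, w} E)) = card (line_edges E) + degree E u + degree E w"
proof -
  have "finite E"
    using assms(1) by (simp add: simple_graph_def)
  have "{f\<in>E. u \<in> f} \<inter> {f\<in>E. w \<in> f} = {}"
  proof (rule ccontr)
    assume "{f\<in>E. u \<in> f} \<inter> {f\<in>E. w \<in> f} \<noteq> {}"
    then obtain f where "f \<in> E" "u \<in> f" "w \<in> f"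
      by blast
    moreover have "card f = 2"
      using assms(1) \<open>f \<in> E\<close> by (simp add: simple_graph_def)
    ultimately have "f = {u, w}"
      using assms(2) by (auto simp: card_2_iff)
    with \<open>f \<in> E\<close> assms(3) show False
      by simp
  qed
  moreover have "{f\<in>E. {u, w} \<inter> f \<noteq> {}} = {f\<in>E. u \<in> f} \<union> {f\<in>E. w \<in> f}"
    by blast
  ultimately show ?thesis
    using \<open>finite E\<close> assms(3)
    by (simp add: card_line_edges_insert card_Un_disjoint degree_def)
qed

lemma choose_two_Suc: "Suc n choose 2 = (n choose 2) + n"
  by (simp add: numeral_2_eq_2)

definition fan :: "nat \<Rightarrow> nat set \<Rightarrow> nat set set" where
  "fan u W = (\<lambda>w. {u, w}) ` W"

lemma fan_insert: "fan u (insert w W) = insert {u, w} (fan u W)"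
  by (simp add: fan_def)

lemma finite_fan: "finite W \<Longrightarrow> finite (fan u W)"
  by (simp add: fan_def)

lemma card_fan: "card (fan u W) = card W"
  unfolding fan_def by (rule card_image) (auto intro!: inj_onI simp: doubleton_eq_iff)

lemma simple_graph_Un_fan:
  assumes "simple_graph E" "finite W" "u \<notin> W"
  shows "simple_graph (E \<union> fan u W)"
proof -
  have "card {u, w} = 2" if "w \<in> W" for w
    using that assms(3) by (cases "u = w") auto
  then show ?thesis
    using assms(1,2) unfolding simple_graph_def fan_def by auto
qed

lemma card_Un_fan:
  assumes "finite E" "finite W" "E \<inter> fan u W = {}"
  shows "card (E \<union> fan u W) = card E + card W"
  using assms by (simp add: card_Un_disjoint card_fan finite_fan)

lemma degree_Un_disjoint:
  assumes "finite E" "finite F" "E \<inter> F = {}"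
  shows "degree (E \<union> F) x = degree E x + degree F x"
proof -
  have "{e\<in>E \<union> F. x \<in> e} = {e\<in>E. x \<in> e} \<union> {e\<in>F. x \<in> e}"
    by blast
  then show ?thesis
    using assms unfolding degree_def by (simp add: card_Un_disjoint disjoint_iff)
qed

lemma degree_fan:
  assumes "u \<notin> W"
  shows "degree (fan u W) x = (if x = u then card W else if x \<in> W then 1 else 0)"
proof -
  have "{e\<in>fan u W. x \<in> e} = (if x = u then fan u W else if x \<in> W then {{u, x}} else {})"
    using assms unfolding fan_def by auto
  then show ?thesis
    unfolding degree_def by (simp add: card_fan)
qed

lemma card_line_edges_Un_fan:
  assumes "simple_graph E" "finite W" "u \<notin> W" "E \<inter> fan u W = {}"
  shows "card (line_edges (E \<union> fan u W))
    = card (line_edges E) + card W * degree E u + (card W choose 2) + (\<Sum>w\<in>W. degree E w)"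
  using assms(2-)
proof (induction W rule: finite_induct)
  case empty
  then show ?case
    by (simp add: fan_def)
next
  case (insert w W)
  let ?F = "E \<union> fan u W"
  have "finite E"
    using assms(1) by (simp add: simple_graph_def)
  have "u \<noteq> w" "u \<notin> W" "E \<inter> fan u W = {}"
    using insert.prems by (auto simp: fan_insert)
  moreover have "{u, w} \<notin> ?F"
    using insert.prems insert.hyps(2) by (auto simp: fan_def fan_insert doubleton_eq_iff)
  moreover have "degree ?F u = degree E u + card W" "degree ?F w = degree E w"
    using calculation insert.hyps \<open>finite E\<close>
    by (simp_all add: degree_Un_disjoint degree_fan finite_fan)
  ultimately show ?case
    using insert.IH insert.hyps assms(1)
    by (simp add: fan_insert card_line_edges_insert_edge simple_graph_Un_fan choose_two_Suc)
qed

lemma simple_graph_fan: "finite W \<Longrightarrow> u \<notin> W \<Longrightarrow> simple_graph (fan u W)"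
  using simple_graph_Un_fan[of "{}"] by (simp add: simple_graph_def)

lemma card_line_edges_fan:
  assumes "finite W" "u \<notin> W"
  shows "card (line_edges (fan u W)) = card W choose 2"
  using card_line_edges_Un_fan[of "{}" W u] assms
  by (simp add: simple_graph_def line_edges_def degree_def)

lemma exists_graph_star_with_fan:
  assumes "j < D" "a \<le> j"
  shows "\<exists>E. simple_graph E \<and> card E = D + j \<and> card (line_edges E) = (D choose 2) + (Suc j choose 2) + a"
proof -
  define S where "S = fan 0 {1..D}"
  define W1 where "W1 = {2..a + 1}"
  define W2 where "W2 = {D + 1..D + (j - a)}"
  have S: "simple_graph S" "card S = D" "card (line_edges S) = D choose 2"
    unfolding S_def by (simp_all add: simple_graph_fan card_fan card_line_edges_fan)
  have degree_S: "degree S x = (if x = 0 then D else if x \<in> {1..D} then 1 else 0)" for x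
    unfolding S_def by (simp add: degree_fan)
  have "W1 \<inter> W2 = {}"
    using assms unfolding W1_def W2_def by auto
  then have W: "finite (W1 \<union> W2)" "1 \<notin> W1 \<union> W2" "card (W1 \<union> W2) = j"
    using assms unfolding W1_def W2_def by (simp_all add: card_Un_disjoint)
  have "S \<inter> fan 1 (W1 \<union> W2) = {}"
  proof -
    have "0 \<in> e" if "e \<in> S" for e
      using that unfolding S_def fan_def by blast
    moreover have "0 \<notin> e" if "e \<in> fan 1 (W1 \<union> W2)" for e
      using that unfolding W1_def W2_def fan_def by auto
    ultimately show ?thesis
      by blast
  qed
  moreover have "(\<Sum>w\<in>W1 \<union> W2. degree S w) = a"
  proof -
    have "(\<Sum>w\<in>W1. degree S w) = (\<Sum>w\<in>W1. 1)"
      using assms unfolding W1_def by (intro sum.cong) (auto simp: degree_S)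
    moreover have "(\<Sum>w\<in>W2. degree S w) = 0"
      unfolding W2_def by (intro sum.neutral) (auto simp: degree_S)
    ultimately show ?thesis
      using \<open>W1 \<inter> W2 = {}\<close> by (simp add: sum.union_disjoint W1_def W2_def)
  qed
  moreover have "degree S 1 = 1"
    using assms by (simp add: degree_S)
  moreover have "finite S"
    using S(1) by (simp add: simple_graph_def)
  ultimately show ?thesis
    using S W
    by (intro exI[of _ "S \<union> fan 1 (W1 \<union> W2)"])
      (simp add: simple_graph_Un_fan card_Un_fan card_line_edges_Un_fan choose_two_Suc)
qed

lemma add_isolated_edge:
  assumes "simple_graph E"
  obtains E' where "simple_graph E'" "card E' = Suc (card E)"
    "card (line_edges E') = card (line_edges E)"
    "\<And>z. degree E z \<le> degree E' z" "\<And>z. degree E' z \<le> max 1 (degree E z)"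
proof -
  have "finite E"
    using assms by (simp add: simple_graph_def)
  obtain x where x: "x \<notin> vertices E"
    using ex_new_if_finite[OF infinite_UNIV_nat finite_vertices[OF assms]] by blast
  obtain y where y: "y \<notin> insert x (vertices E)"
    using ex_new_if_finite[OF infinite_UNIV_nat] finite_vertices[OF assms] by blast
  have "x \<notin> {y}" "degree E x = 0" "degree E y = 0"
    using x y degree_pos_iff[OF \<open>finite E\<close>] by auto
  moreover have disjoint: "E \<inter> fan x {y} = {}"
    using x unfolding vertices_def fan_def by blast
  ultimately have degree: "degree (E \<union> fan x {y}) z = degree E z + (if z = x \<or> z = y then 1 else 0)" for z
    using \<open>finite E\<close> by (simp add: degree_Un_disjoint finite_fan degree_fan)
  show ?thesis
  proof (rule that[of "E \<union> fan x {y}"])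
    show "simple_graph (E \<union> fan x {y})"
      using assms \<open>x \<notin> {y}\<close> by (simp add: simple_graph_Un_fan)
    show "card (E \<union> fan x {y}) = Suc (card E)"
      using \<open>finite E\<close> disjoint by (simp add: card_Un_fan)
    show "card (line_edges (E \<union> fan x {y})) = card (line_edges E)"
      using assms \<open>x \<notin> {y}\<close> disjoint \<open>degree E x = 0\<close> \<open>degree E y = 0\<close>
      by (simp add: card_line_edges_Un_fan)
    show "degree E z \<le> degree (E \<union> fan x {y}) z" for z
      by (simp add: degree)
    show "degree (E \<union> fan x {y}) z \<le> max 1 (degree E z)" for z
      using \<open>degree E x = 0\<close> \<open>degree E y = 0\<close> by (auto simp: degree)
  qed
qed

lemma exists_graph_card_line_edges:
  assumes "k < D" "m \<le> (k choose 2) + 2 * k"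
  shows "\<exists>E. simple_graph E \<and> card E = D + k \<and> card (line_edges E) = (D choose 2) + m"
  using assms
proof (induction k arbitrary: m)
  case 0
  then show ?case
    using exists_graph_star_with_fan[of 0 D 0] by (simp add: numeral_2_eq_2)
next
  case (Suc k)
  show ?case
  proof (cases "m \<le> (k choose 2) + 2 * k")
    case True
    then obtain E where E: "simple_graph E" "card E = D + k" "card (line_edges E) = (D choose 2) + m"
      using Suc.IH Suc.prems(1) by force
    obtain E' where "simple_graph E'" "card E' = Suc (card E)" "card (line_edges E') = card (line_edges E)"
      using add_isolated_edge[OF E(1)] by metis
    then show ?thesis
      using E(2,3) by (intro exI[of _ E']) simp
  next
    case False
    define a where "a = m - (Suc (Suc k) choose 2)"
    have "m = (Suc (Suc k) choose 2) + a" "a \<le> Suc k"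
      using False Suc.prems(2) unfolding a_def by (simp_all add: choose_two_Suc)
    moreover obtain E where "simple_graph E" "card E = D + Suc k"
      "card (line_edges E) = (D choose 2) + (Suc (Suc k) choose 2) + a"
      using exists_graph_star_with_fan[OF Suc.prems(1) \<open>a \<le> Suc k\<close>] by blast
    ultimately show ?thesis
      by (intro exI[of _ E]) simp
  qed
qed

lemma exists_graph_max_degree:
  assumes "1 \<le> D" "D \<le> N"
  shows "\<exists>E. simple_graph E \<and> card E = N \<and> max_degree E = D"
proof -
  have "\<exists>E. simple_graph E \<and> card E = D + k \<and> (\<forall>z. degree E z \<le> D) \<and> degree E 0 = D" for k
  proof (induction k)
    case 0
    have "degree (fan 0 {1..D}) z \<le> D" for z
      by (simp add: degree_fan)
    then show ?case
      by (intro exI[of _ "fan 0 {1..D}"]) (simp add: simple_graph_fan card_fan degree_fan)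
  next
    case (Suc k)
    then obtain E where E: "simple_graph E" "card E = D + k" "\<forall>z. degree E z \<le> D" "degree E 0 = D"
      by blast
    obtain E' where E': "simple_graph E'" "card E' = Suc (card E)"
      "\<And>z. degree E z \<le> degree E' z" "\<And>z. degree E' z \<le> max 1 (degree E z)"
      using add_isolated_edge[OF E(1)] by metis
    have "degree E' z \<le> D" for z
      using E'(4)[of z] E(3)[rule_format, of z] assms(1) by simp
    moreover have "degree E' 0 = D"
      using E'(3)[of 0] \<open>degree E' 0 \<le> D\<close> E(4) by simp
    ultimately show ?case
      using E'(1,2) E(2) by auto
  qed
  then obtain E where E: "simple_graph E" "card E = D + (N - D)" "\<forall>z. degree E z \<le> D" "degree E 0 = D"
    by blast
  then have "max_degree E = D"
    using assms(1) by (intro max_degree_eqI) auto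
  then show ?thesis
    using E assms(2) by auto
qed

lemma other_endpoint_in_meet:
  assumes "card e = 2" "v \<in> e" "v \<notin> f" "e \<inter> f \<noteq> {}"
  obtains x where "x \<in> f" "e = {v, x}"
proof -
  obtain x where "x \<in> e" "x \<in> f"
    using assms(4) by blast
  moreover have "x \<noteq> v"
    using calculation assms(3) by blast
  ultimately have "e = {v, x}"
    using assms(1,2) by (auto simp: card_2_iff)
  with \<open>x \<in> f\<close> show ?thesis
    using that by blast
qed

lemma card_line_edges_le:
  assumes "simple_graph E" "degree E v = d"
  shows "card (line_edges E) \<le> (d choose 2) + ((card E - d) choose 2) + 2 * (card E - d)"
proof -
  define A where "A = {e\<in>E. v \<in> e}"
  define B where "B = E - A"
  define X where "X = (\<lambda>(f, x). {{v, x}, f}) ` (SIGMA f:B. f)"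
  have "finite E" "\<forall>e\<in>E. card e = 2"
    using assms(1) by (simp_all add: simple_graph_def)
  then have A: "finite A" "card A = d" and B: "finite B" "card B = card E - d"
    using assms(2) unfolding A_def B_def degree_def by (simp_all add: card_Diff_subset)
  have mixed: "{e1, e2} \<in> X" if "e1 \<in> A" "e2 \<in> B" and meet: "e1 \<inter> e2 \<noteq> {}" for e1 e2
  proof -
    have "card e1 = 2" "v \<in> e1" "v \<notin> e2"
      using that(1,2) \<open>\<forall>e\<in>E. card e = 2\<close> unfolding A_def B_def by auto
    then obtain x where "x \<in> e2" "e1 = {v, x}"
      using meet by (rule other_endpoint_in_meet)
    then show ?thesis
      using that(2) unfolding X_def by force
  qed
  let ?P = "{S. S \<subseteq> A \<and> card S = 2}" and ?Q = "{S. S \<subseteq> B \<and> card S = 2}"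
  have cover: "line_edges E \<subseteq> ?P \<union> ?Q \<union> X"
  proof
    fix s assume "s \<in> line_edges E"
    then obtain e1 e2 where s: "s = {e1, e2}" "e1 \<in> E" "e2 \<in> E" "e1 \<noteq> e2" "e1 \<inter> e2 \<noteq> {}"
      unfolding line_edges_def by blast
    then have "e1 \<in> A \<and> e2 \<in> A \<or> e1 \<in> B \<and> e2 \<in> B \<or> e1 \<in> A \<and> e2 \<in> B \<or> e2 \<in> A \<and> e1 \<in> B"
      unfolding A_def B_def by blast
    moreover have "e2 \<inter> e1 \<noteq> {}"
      using s(5) by blast
    ultimately show "s \<in> ?P \<union> ?Q \<union> X"
      using s mixed[of e1 e2] mixed[of e2 e1] by (auto simp: insert_commute)
  qed
  have "finite (SIGMA f:B. f)" "card (SIGMA f:B. f) = 2 * card B"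
  proof -
    have "\<forall>f\<in>B. card f = 2"
      using \<open>\<forall>e\<in>E. card e = 2\<close> unfolding B_def by blast
    moreover from this have "\<forall>f\<in>B. finite f"
      by (auto intro: card_ge_0_finite)
    ultimately show "finite (SIGMA f:B. f)" "card (SIGMA f:B. f) = 2 * card B"
      using B(1) by simp_all
  qed
  then have "finite X" "card X \<le> 2 * card B"
    unfolding X_def by (auto intro: card_image_le[THEN order_trans])
  have "card (line_edges E) \<le> card (?P \<union> ?Q \<union> X)"
    using cover A(1) B(1) \<open>finite X\<close> by (intro card_mono) simp_all
  also have "\<dots> \<le> card ?P + card ?Q + card X"
    using card_Un_le[of ?P ?Q] card_Un_le[of "?P \<union> ?Q" X] by simp
  also have "\<dots> \<le> (d choose 2) + ((card E - d) choose 2) + 2 * (card E - d)"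
    using A B \<open>card X \<le> 2 * card B\<close> by (simp add: n_subsets)
  finally show ?thesis .
qed

lemma f_max_le:
  assumes "1 \<le> D" "D \<le> N"
  shows "f_max N D \<le> (D choose 2) + ((N - D) choose 2) + 2 * (N - D)"
proof -
  define S where "S = {card (line_edges E) | E. simple_graph E \<and> card E = N
      \<and> max_degree E = D \<and> min_degree E \<ge> 1}"
  have bounded: "x \<le> (D choose 2) + ((N - D) choose 2) + 2 * (N - D)" if "x \<in> S" for x
  proof -
    obtain E where E: "x = card (line_edges E)" "simple_graph E" "card E = N" "max_degree E = D"
      using \<open>x \<in> S\<close> unfolding S_def by blast
    then have "E \<noteq> {}"
      using assms by auto
    then obtain v where "degree E v = D"
      using max_degree_attained[OF E(2)] E(4) by metis
    then show ?thesis
      using card_line_edges_le[OF E(2)] E(1,3) by blast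
  qed
  obtain E where E: "simple_graph E" "card E = N" "max_degree E = D"
    using exists_graph_max_degree[OF assms] by blast
  then have "E \<noteq> {}"
    using assms by auto
  with E have "S \<noteq> {}"
    unfolding S_def by (blast intro: min_degree_ge_1)
  moreover have "finite S"
    using bounded by (meson finite_nat_set_iff_bounded_le)
  ultimately show ?thesis
    unfolding f_max_def S_def[symmetric] using bounded by simp
qed

theorem mainTheorem16:
  fixes N D M :: nat
  assumes "N < 2 * D" and "D \<le> N"
    and "D choose 2 \<le> M" and "M \<le> f_max N D"
  shows "feasible_line N M"
proof -
  have "N - D < D" "1 \<le> D"
    using assms(1,2) by linarith+
  moreover have "M - (D choose 2) \<le> ((N - D) choose 2) + 2 * (N - D)"
    using f_max_le[OF \<open>1 \<le> D\<close> assms(2)] assms(4) by linarith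
  ultimately obtain E where "simple_graph E" "card E = D + (N - D)"
    "card (line_edges E) = (D choose 2) + (M - (D choose 2))"
    using exists_graph_card_line_edges by blast
  then show ?thesis
    unfolding feasible_line_def using assms(2,3) by auto
qed

end
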